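(* Let $\mathcal F$ be a proper filter on $\omega$. In each of the following pairs the two games are dual, i.e. a player has a winning strategy in one game if and only if the other player has a winning strategy in the other game: (1) $\mathfrak G(\mathcal F^+,\omega,\mathcal F)$ and $\mathfrak G(\mathcal F,\omega,\mathcal F^c)$; (2) $\mathfrak G(\mathcal F^+,\omega,\mathcal F^+)$ and $\mathfrak G(\mathcal F,\omega,\mathcal F^* )$; (3) $\mathfrak G(\mathcal F^+,\omega,\mathcal F^c)$ and $\mathfrak G(\mathcal F,\omega,\mathcal F)$; (4) $\mathfrak G(\mathcal F^+,\omega,\mathcal F^* )$ and $\mathfrak G(\mathcal F,\omega,\mathcal F^+)$.
   Context: A filter on $\omega$ is a family $\mathcal F\subseteq\mathcal P(\omega)$ closed under finite intersections and supersets and containing all cofinite sets; it is proper if all its members are infinite. $\mathcal F^+=\{X:\omega\setminus X\notin\mathcal F\}$, $\mathcal F^c=\mathcal P(\omega)\setminus\mathcal F$, $\mathcal F^*=\mathcal P(\omega)\setminus\mathcal F^+$. Game $\mathfrak G(\mathcal X,\omega,\mathcal Z)$: at each stage $k\in\omega$, player I chooses $X_k\in\mathcal X$ and player II responds with $n_k\in X_k$; II wins if $\{n_k:k\in\omega\}\in\mathcal Z$, otherwise I wins. *)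

theory Defs
  imports Main
begin

definition is_filter :: "nat set set \<Rightarrow> bool" where
  "is_filter F \<longleftrightarrow>
     (\<forall>A\<in>F. \<forall>B\<in>F. A \<inter> B \<in> F) \<and>
     (\<forall>A B. A \<in> F \<and> A \<subseteq> B \<longrightarrow> B \<in> F) \<and>
     (\<forall>A. finite (- A) \<longrightarrow> A \<in> F)"

definition proper_filter :: "nat set set \<Rightarrow> bool" where
  "proper_filter F \<longleftrightarrow> is_filter F \<and> (\<forall>A\<in>F. infinite A)"

definition fplus :: "nat set set \<Rightarrow> nat set set" where
  "fplus F = {X. - X \<notin> F}"

definition fcompl :: "nat set set \<Rightarrow> nat set set" where
  "fcompl F = - F"

definition fstar :: "nat set set \<Rightarrow> nat set set" where
  "fstar F = - fplus F"

text \<open>A strategy for player I maps the finite sequence of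
  II's previous moves to I's next move; a strategy for player II maps the finite
  sequence of I's moves so far (X_0,...,X_k) to II's answer n_k.\<close>

definition I_wins :: "nat set set \<Rightarrow> nat set set \<Rightarrow> bool" where
  "I_wins XX ZZ \<longleftrightarrow> (\<exists>\<sigma> :: nat list \<Rightarrow> nat set.
     (\<forall>h. \<sigma> h \<in> XX) \<and>
     (\<forall>n :: nat \<Rightarrow> nat. (\<forall>k. n k \<in> \<sigma> (map n [0..<k])) \<longrightarrow> range n \<notin> ZZ))"

definition II_wins :: "nat set set \<Rightarrow> nat set set \<Rightarrow> bool" where
  "II_wins XX ZZ \<longleftrightarrow> (\<exists>\<tau> :: nat set list \<Rightarrow> nat.
     \<forall>X :: nat \<Rightarrow> nat set. (\<forall>k. X k \<in> XX) \<longrightarrow>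
       (\<forall>k. \<tau> (map X [0..<Suc k]) \<in> X k) \<and>
       range (\<lambda>k. \<tau> (map X [0..<Suc k])) \<in> ZZ)"

definition dual_games :: "nat set set \<Rightarrow> nat set set \<Rightarrow> nat set set \<Rightarrow> nat set set \<Rightarrow> bool" where
  "dual_games X1 Z1 X2 Z2 \<longleftrightarrow>
     (I_wins X1 Z1 \<longleftrightarrow> II_wins X2 Z2) \<and> (II_wins X1 Z1 \<longleftrightarrow> I_wins X2 Z2)"

end

theory Submission
  imports Defs
begin

text \<open>The moves of player II in one game are the moves of player I in the other. If \<sigma> wins
  \<open>\<GG>(grill B, \<omega>, Z)\<close> for I, then II answers each \<open>X\<^sub>k \<in> B\<close> in \<open>\<GG>(B, \<omega>, -Z)\<close> by a point of
  \<open>X\<^sub>k \<inter> \<sigma>(n\<^sub>0, \<dots>, n\<^sub>k\<^sub>-\<^sub>1)\<close>, which exists because \<sigma>'s move meets every member of B; the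
  resulting play is a \<sigma>-play. Conversely, if \<tau> wins \<open>\<GG>(B, \<omega>, -Z)\<close> for II, then I plays
  the set of all \<tau>-answers to the possible next moves \<open>Y \<in> B\<close>: it meets every member of B, and
  every point II picks from it is the \<tau>-answer to some move, so each play of I's game is
  shadowed by a \<tau>-play. For an upward closed family F the grill of F is \<open>F\<^sup>+\<close> and the grill of
  \<open>F\<^sup>+\<close> is F, which gives all four dualities; of the filter axioms only upward closure is
  needed.\<close>

definition grill :: "'a set set \<Rightarrow> 'a set set" where
  "grill B = {S. \<forall>b\<in>B. S \<inter> b \<noteq> {}}"

lemma grill_eq_fplus:
  assumes "\<And>A B. A \<in> F \<Longrightarrow> A \<subseteq> B \<Longrightarrow> B \<in> F"
  shows "grill F = fplus F"
proof (intro set_eqI iffI)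
  fix S
  show "S \<in> fplus F" if "S \<in> grill F"
    using that unfolding grill_def fplus_def by auto
  show "S \<in> grill F" if "S \<in> fplus F"
  proof -
    have "S \<inter> b \<noteq> {}" if "b \<in> F" for b
      using assms[OF that, of "- S"] \<open>S \<in> fplus F\<close> by (auto simp: fplus_def)
    then show ?thesis
      unfolding grill_def by blast
  qed
qed

lemma grill_fplus:
  assumes "\<And>A B. A \<in> F \<Longrightarrow> A \<subseteq> B \<Longrightarrow> B \<in> F"
  shows "grill (fplus F) = F"
proof (intro set_eqI iffI)
  fix S
  show "S \<in> F" if "S \<in> grill (fplus F)"
    using that unfolding grill_def fplus_def by (force dest: spec[of _ "- S"])
  show "S \<in> grill (fplus F)" if "S \<in> F"
  proof -
    have "S \<inter> b \<noteq> {}" if "- b \<notin> F" for b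
      using assms[OF \<open>S \<in> F\<close>, of "- b"] that by auto
    then show ?thesis
      unfolding grill_def fplus_def by blast
  qed
qed

definition replies :: "(nat list \<Rightarrow> nat set) \<Rightarrow> nat set list \<Rightarrow> nat list" where
  "replies \<sigma> Xs = foldl (\<lambda>ns X. ns @ [SOME m. m \<in> X \<inter> \<sigma> ns]) [] Xs"

lemma replies_snoc:
  "replies \<sigma> (Xs @ [X]) = replies \<sigma> Xs @ [SOME m. m \<in> X \<inter> \<sigma> (replies \<sigma> Xs)]"
  by (simp add: replies_def)

lemma I_wins_grill_imp_II_wins:
  assumes "I_wins (grill B) Z"
  shows "II_wins B (- Z)"
proof -
  obtain \<sigma> where \<sigma>_grill: "\<And>h. \<sigma> h \<in> grill B"
    and \<sigma>_wins: "\<And>n. (\<forall>k. n k \<in> \<sigma> (map n [0..<k])) \<Longrightarrow> range n \<notin> Z"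
    using assms unfolding I_wins_def by blast
  define \<tau> where "\<tau> Xs = last (replies \<sigma> Xs)" for Xs
  have "(\<forall>k. \<tau> (map X [0..<Suc k]) \<in> X k) \<and> range (\<lambda>k. \<tau> (map X [0..<Suc k])) \<in> - Z"
    if XB: "\<forall>k. X k \<in> B" for X
  proof -
    define n where "n k = \<tau> (map X [0..<Suc k])" for k
    have n_eq: "n k = (SOME m. m \<in> X k \<inter> \<sigma> (replies \<sigma> (map X [0..<k])))" for k
      by (simp add: n_def \<tau>_def replies_snoc)
    have replies_eq: "replies \<sigma> (map X [0..<k]) = map n [0..<k]" for k
      by (induction k) (simp_all add: replies_def[of _ "[]"] replies_snoc n_eq)
    have n_legal: "n k \<in> X k \<inter> \<sigma> (map n [0..<k])" for k
    proof -
      have "X k \<inter> \<sigma> (map n [0..<k]) \<noteq> {}"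
        using \<sigma>_grill XB by (auto simp: grill_def)
      then have "\<exists>m. m \<in> X k \<inter> \<sigma> (map n [0..<k])"
        by blast
      from someI_ex[OF this] show ?thesis
        unfolding n_eq[of k] replies_eq[of k] .
    qed
    have "range n \<notin> Z"
      using n_legal by (intro \<sigma>_wins) blast
    with n_legal show ?thesis
      unfolding n_def by blast
  qed
  then show ?thesis
    unfolding II_wins_def by blast
qed

lemma II_strategy_answers_last_move:
  assumes \<tau>_legal: "\<And>X. \<forall>k. X k \<in> B \<Longrightarrow> \<forall>k. \<tau> (map X [0..<Suc k]) \<in> X k"
    and "set Xs \<subseteq> B" and "Xs \<noteq> []"
  shows "\<tau> Xs \<in> last Xs"
proof -
  define X where "X i = (if i < length Xs then Xs ! i else last Xs)" for i
  have XB: "\<forall>k. X k \<in> B"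
    using assms(2,3) by (auto simp: X_def)
  obtain k where k: "length Xs = Suc k"
    using assms(3) by (cases Xs) auto
  have "map X [0..<Suc k] = Xs"
    using k by (intro nth_equalityI) (simp_all del: upt_Suc add: X_def)
  moreover have "X k = last Xs"
    using k assms(3) by (simp add: X_def last_conv_nth)
  ultimately show ?thesis
    using \<tau>_legal[OF XB] by metis
qed

definition pull_move :: "nat set set \<Rightarrow> (nat set list \<Rightarrow> nat) \<Rightarrow> nat set list \<Rightarrow> nat \<Rightarrow> nat set" where
  "pull_move B \<tau> Ys m =
     (if \<exists>Y\<in>B. \<tau> (Ys @ [Y]) = m then SOME Y. Y \<in> B \<and> \<tau> (Ys @ [Y]) = m else SOME Y. Y \<in> B)"

definition pulled_moves :: "nat set set \<Rightarrow> (nat set list \<Rightarrow> nat) \<Rightarrow> nat list \<Rightarrow> nat set list" where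
  "pulled_moves B \<tau> ns = foldl (\<lambda>Ys m. Ys @ [pull_move B \<tau> Ys m]) [] ns"

lemma pulled_moves_snoc:
  "pulled_moves B \<tau> (ns @ [m]) = pulled_moves B \<tau> ns @ [pull_move B \<tau> (pulled_moves B \<tau> ns) m]"
  by (simp add: pulled_moves_def)

lemma pull_move_in:
  assumes "B \<noteq> {}"
  shows "pull_move B \<tau> Ys m \<in> B"
proof (cases "\<exists>Y\<in>B. \<tau> (Ys @ [Y]) = m")
  case True
  then have "\<exists>Y. Y \<in> B \<and> \<tau> (Ys @ [Y]) = m"
    by blast
  from someI_ex[OF this] True show ?thesis
    unfolding pull_move_def by simp
next
  case False
  from assms have "\<exists>Y. Y \<in> B"
    by blast
  from someI_ex[OF this] False show ?thesis
    unfolding pull_move_def by simp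
qed

lemma pull_move_answer:
  assumes "Y \<in> B" and "\<tau> (Ys @ [Y]) = m"
  shows "\<tau> (Ys @ [pull_move B \<tau> Ys m]) = m"
proof -
  have "\<exists>Y. Y \<in> B \<and> \<tau> (Ys @ [Y]) = m"
    using assms by blast
  from someI_ex[OF this] show ?thesis
    using assms unfolding pull_move_def by auto
qed

lemma pulled_moves_in: "B \<noteq> {} \<Longrightarrow> set (pulled_moves B \<tau> ns) \<subseteq> B"
  by (induction ns rule: rev_induct) (simp_all add: pulled_moves_def pulled_moves_snoc pull_move_in)

lemma II_wins_imp_I_wins_grill:
  assumes "II_wins B (- Z)"
  shows "I_wins (grill B) Z"
proof -
  obtain \<tau> where \<tau>_legal: "\<And>X. \<forall>k. X k \<in> B \<Longrightarrow> \<forall>k. \<tau> (map X [0..<Suc k]) \<in> X k"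
    and \<tau>_wins: "\<And>X. \<forall>k. X k \<in> B \<Longrightarrow> range (\<lambda>k. \<tau> (map X [0..<Suc k])) \<in> - Z"
    using assms unfolding II_wins_def by blast
  define \<sigma> where "\<sigma> h = {\<tau> (pulled_moves B \<tau> h @ [Y]) | Y. Y \<in> B}" for h
  have \<sigma>_grill: "\<sigma> h \<in> grill B" for h
  proof -
    have "\<tau> (pulled_moves B \<tau> h @ [b]) \<in> b \<inter> \<sigma> h" if "b \<in> B" for b
    proof -
      have "set (pulled_moves B \<tau> h @ [b]) \<subseteq> B"
        using pulled_moves_in[of B \<tau> h] \<open>b \<in> B\<close> by auto
      then have "\<tau> (pulled_moves B \<tau> h @ [b]) \<in> last (pulled_moves B \<tau> h @ [b])"
        by (intro II_strategy_answers_last_move[OF \<tau>_legal]) simp_all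
      then show ?thesis
        using \<open>b \<in> B\<close> unfolding \<sigma>_def by auto
    qed
    then show ?thesis
      unfolding grill_def by blast
  qed
  have \<sigma>_wins: "range n \<notin> Z" if n_legal: "\<forall>k. n k \<in> \<sigma> (map n [0..<k])" for n
  proof -
    define X where "X k = pull_move B \<tau> (pulled_moves B \<tau> (map n [0..<k])) (n k)" for k
    have pulled_eq: "pulled_moves B \<tau> (map n [0..<k]) = map X [0..<k]" for k
      by (induction k) (simp_all add: pulled_moves_def[of _ _ "[]"] pulled_moves_snoc X_def)
    have "B \<noteq> {}"
      using n_legal[rule_format, of 0] unfolding \<sigma>_def by blast
    then have XB: "\<forall>k. X k \<in> B"
      by (simp add: X_def pull_move_in)
    have answers: "\<tau> (map X [0..<Suc k]) = n k" for k
    proof -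
      have "n k \<in> \<sigma> (map n [0..<k])"
        using n_legal by blast
      then obtain Y where "Y \<in> B" "\<tau> (pulled_moves B \<tau> (map n [0..<k]) @ [Y]) = n k"
        unfolding \<sigma>_def by auto
      then have "\<tau> (pulled_moves B \<tau> (map n [0..<k]) @ [X k]) = n k"
        unfolding X_def by (rule pull_move_answer)
      then show ?thesis
        by (simp add: pulled_eq)
    qed
    show ?thesis
      using \<tau>_wins[OF XB] unfolding answers by simp
  qed
  show ?thesis
    unfolding I_wins_def using \<sigma>_grill \<sigma>_wins by (intro exI[of _ \<sigma>]) simp
qed

lemma I_wins_grill_iff_II_wins: "I_wins (grill B) Z \<longleftrightarrow> II_wins B (- Z)"
  using I_wins_grill_imp_II_wins II_wins_imp_I_wins_grill by blast

lemma dual_games_grill: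
  assumes "grill (grill B) = B"
  shows "dual_games (grill B) Z B (- Z)"
  using I_wins_grill_iff_II_wins[of B Z] I_wins_grill_iff_II_wins[of "grill B" "- Z"]
  unfolding dual_games_def assms by simp

theorem theorem2p10:
  fixes F :: "nat set set"
  assumes "proper_filter F"
  shows "dual_games (fplus F) F F (fcompl F) \<and>
         dual_games (fplus F) (fplus F) F (fstar F) \<and>
         dual_games (fplus F) (fcompl F) F F \<and>
         dual_games (fplus F) (fstar F) F (fplus F)"
proof -
  have up: "\<And>A B. A \<in> F \<Longrightarrow> A \<subseteq> B \<Longrightarrow> B \<in> F"
    using assms unfolding proper_filter_def is_filter_def by blast
  have dual: "dual_games (fplus F) Z F (- Z)" for Z
    using dual_games_grill[of F Z] grill_eq_fplus[OF up] grill_fplus[OF up] by simp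
  show ?thesis
    using dual[of F] dual[of "fplus F"] dual[of "- F"] dual[of "- fplus F"]
    by (simp add: fcompl_def fstar_def)
qed

end
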